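(* In the online ADDIS setting of the context, assume the $p$-values $P_1,P_2,\dots$ are independent, let $T\in\mathbb N$ and let $g:\{0,1\}^T\to\mathbb R$ be coordinatewise nondecreasing. Assume $\alpha_t$, $\lambda_t$ and $1-\tau_t$ are monotonic functions of the past for all $t$, and $\alpha_t\le\lambda_t<\tau_t$ for all $t$. Then for any $t\le T$ with $t\in\mathcal H_0$ whose null $p$-value is conditionally uniformly conservative, $$\mathbb E\Big[\frac{\alpha_t\mathbf 1\{\lambda_t<P_t\le\tau_t\}}{(\tau_t-\lambda_t)(g(R_{1:T})\vee1)}\,\Big|\,\mathcal F^{t-1},S_t=1\Big]\ \ge\ \mathbb E\Big[\frac{\alpha_t}{\tau_t(g(R_{1:T})\vee1)}\,\Big|\,\mathcal F^{t-1},S_t=1\Big]\ \ge\ \mathbb E\Big[\frac{\mathbf 1\{P_t\le\alpha_t\}}{g(R_{1:T})\vee1}\,\Big|\,\mathcal F^{t-1},S_t=1\Big].$$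
   Context: Let $P_1,P_2,\dots$ be $p$-values, $\mathcal H_0\subseteq\mathbb N$ the set of true null indices. Sequences $\{\alpha_j\},\{\lambda_j\},\{\tau_j\}$ in $[0,1]$ define $S_j=\mathbf 1\{P_j\le\tau_j\}$, $C_j=\mathbf 1\{P_j\le\lambda_j\}$, $R_j=\mathbf 1\{P_j\le\alpha_j\}$; $R_{1:T}=(R_1,\dots,R_T)$; $\mathcal F^t=\sigma(R_{1:t},C_{1:t},S_{1:t})$, $\mathcal F^0$ trivial; $\alpha_t,\lambda_t,\tau_t$ are deterministic functions of $(R_{1:t-1},C_{1:t-1},S_{1:t-1})$. Such a function is a monotonic function of the past if it is coordinatewise nondecreasing in each $R_i$ and $C_i$ and coordinatewise nonincreasing in each $S_i$. The null $p$-value $P_t$ is conditionally uniformly conservative if for all $x,\tau\in(0,1)$, $\Pr(P_t/\tau\le x\mid P_t\le\tau,\mathcal F^{t-1})\le x$. *)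

theory Defs
  imports "HOL-Probability.Probability"
begin

type_synonym level_fn = "nat \<Rightarrow> bool list \<Rightarrow> bool list \<Rightarrow> bool list \<Rightarrow> real"

text \<open>hist al la ta p n = (R_{1:n}, C_{1:n}, S_{1:n}) for the realisation p of the p-values
  (p-values are indexed from 1).\<close>
fun hist :: "level_fn \<Rightarrow> level_fn \<Rightarrow> level_fn \<Rightarrow> (nat \<Rightarrow> real) \<Rightarrow> nat
              \<Rightarrow> bool list \<times> bool list \<times> bool list" where
  "hist al la ta p 0 = ([], [], [])"
| "hist al la ta p (Suc n) =
     (case hist al la ta p n of (r, c, s) \<Rightarrow>
        (r @ [p (Suc n) \<le> al (Suc n) r c s],
         c @ [p (Suc n) \<le> la (Suc n) r c s],
         s @ [p (Suc n) \<le> ta (Suc n) r c s]))"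

definition lev :: "level_fn \<Rightarrow> level_fn \<Rightarrow> level_fn \<Rightarrow> level_fn \<Rightarrow> (nat \<Rightarrow> real) \<Rightarrow> nat \<Rightarrow> real" where
  "lev al la ta f p t = (case hist al la ta p (t - 1) of (r, c, s) \<Rightarrow> f t r c s)"

definition mono_past :: "level_fn \<Rightarrow> nat \<Rightarrow> bool" where
  "mono_past f t \<longleftrightarrow>
     (\<forall>r r' c c' s s'. length r = t - 1 \<and> length c = t - 1 \<and> length s = t - 1 \<and>
        list_all2 (\<le>) r r' \<and> list_all2 (\<le>) c c' \<and> list_all2 (\<le>) s' s
        \<longrightarrow> f t r c s \<le> f t r' c' s')"

text \<open>F^{t-1} = sigma(R_{1:t-1}, C_{1:t-1}, S_{1:t-1}), jointly with an extra indicator E.\<close>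
definition past_with :: "'a measure \<Rightarrow> (nat \<Rightarrow> 'a \<Rightarrow> real) \<Rightarrow> level_fn \<Rightarrow> level_fn \<Rightarrow> level_fn
                         \<Rightarrow> nat \<Rightarrow> ('a \<Rightarrow> bool) \<Rightarrow> 'a measure" where
  "past_with M P al la ta t E =
     vimage_algebra (space M) (\<lambda>\<omega>. (hist al la ta (\<lambda>j. P j \<omega>) (t - 1), E \<omega>)) (count_space UNIV)"

text \<open>The null p-value P_t is conditionally uniformly conservative:
  Pr(P_t/tau \<le> x | P_t \<le> tau, F^{t-1}) \<le> x for all x, tau in (0,1).\<close>
definition cond_unif_conservative :: "'a measure \<Rightarrow> (nat \<Rightarrow> 'a \<Rightarrow> real) \<Rightarrow> level_fn \<Rightarrow> level_fn
                                      \<Rightarrow> level_fn \<Rightarrow> nat \<Rightarrow> bool" where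
  "cond_unif_conservative M P al la ta t \<longleftrightarrow>
     (\<forall>x \<tau>::real. 0 < x \<and> x < 1 \<and> 0 < \<tau> \<and> \<tau> < 1 \<longrightarrow>
        (AE \<omega> in M. P t \<omega> \<le> \<tau> \<longrightarrow>
           real_cond_exp M (past_with M P al la ta t (\<lambda>\<omega>. P t \<omega> \<le> \<tau>))
              (\<lambda>\<omega>. of_bool (P t \<omega> / \<tau> \<le> x)) \<omega> \<le> x))"

end

theory Submission
  imports Defs
begin

text \<open>Condition on the history \<open>h = (R, C, S)\<^sub>1\<^sub>:\<^sub>t\<^sub>-\<^sub>1\<close> and on \<open>S\<^sub>t = 1\<close>. On such an atom the
  levels \<open>\<alpha>\<^sub>t \<le> \<lambda>\<^sub>t < \<tau>\<^sub>t\<close> are constants \<open>a \<le> l < u\<close>, and the denominator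
  \<open>g(R\<^sub>1\<^sub>:\<^sub>T) \<or> 1\<close> depends on \<open>P\<^sub>t\<close> only through \<open>(R\<^sub>t, C\<^sub>t, S\<^sub>t)\<close>. Since the levels are
  monotonic functions of the past and \<open>g\<close> is monotone, the denominator is smallest when \<open>P\<^sub>t\<close> is
  frozen at \<open>u\<close> and largest when it is frozen at \<open>0\<close>, with equality on \<open>{l < P\<^sub>t \<le> u}\<close>
  and on \<open>{P\<^sub>t \<le> a}\<close> respectively. A frozen denominator is a function of the other p-values,
  so by independence every integral over an atom factorises into the mean of a frozen weight
  times a probability about \<open>P\<^sub>t\<close> alone. Conditional uniform conservativeness gives
  \<open>F y \<le> y / u * F u\<close> for the distribution function \<open>F\<close> of \<open>P\<^sub>t\<close>, and both inequalities
  reduce to this bound.\<close>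

section \<open>Histories\<close>

lemma length_hist:
  "hist al la ta p n = (r, c, s) \<Longrightarrow> length r = n \<and> length c = n \<and> length s = n"
  by (induction n arbitrary: r c s) (auto split: prod.splits)

lemma hist_cong:
  "(\<And>j. 1 \<le> j \<Longrightarrow> j \<le> n \<Longrightarrow> p j = p' j) \<Longrightarrow> hist al la ta p n = hist al la ta p' n"
  by (induction n) (auto split: prod.splits)

lemma hist_eq_snoc:
  assumes "1 \<le> t" and "hist al la ta p (t - 1) = (r, c, s)"
  shows "hist al la ta p t = (r @ [p t \<le> al t r c s], c @ [p t \<le> la t r c s], s @ [p t \<le> ta t r c s])"
  using assms by (cases t) auto

fun hist_le :: "bool list \<times> bool list \<times> bool list \<Rightarrow> bool list \<times> bool list \<times> bool list \<Rightarrow> bool" where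
  "hist_le (r, c, s) (r', c', s') \<longleftrightarrow> list_all2 (\<le>) r r' \<and> list_all2 (\<le>) c c' \<and> list_all2 (\<le>) s' s"

lemma hist_le_propagates:
  assumes mono_al: "\<And>s. s \<ge> 1 \<Longrightarrow> mono_past al s"
    and mono_la: "\<And>s. s \<ge> 1 \<Longrightarrow> mono_past la s"
    and mono_ta: "\<And>s. s \<ge> 1 \<Longrightarrow> mono_past (\<lambda>k r c s. 1 - ta k r c s) s"
    and agree: "\<And>j. j \<noteq> t \<Longrightarrow> p j = p' j"
    and le_t: "hist_le (hist al la ta p t) (hist al la ta p' t)"
  shows "t \<le> n \<Longrightarrow> hist_le (hist al la ta p n) (hist al la ta p' n)"
proof (induction n)
  case 0
  then show ?case using le_t by simp
next
  case (Suc n)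
  show ?case
  proof (cases "t = Suc n")
    case True
    then show ?thesis using le_t by simp
  next
    case False
    obtain r c s r' c' s' where h: "hist al la ta p n = (r, c, s)" "hist al la ta p' n = (r', c', s')"
      by (metis prod_cases3)
    have len: "length r = n" "length c = n" "length s = n"
      using length_hist[OF h(1)] by auto
    have le: "list_all2 (\<le>) r r'" "list_all2 (\<le>) c c'" "list_all2 (\<le>) s' s"
      using Suc False h by auto
    have "al (Suc n) r c s \<le> al (Suc n) r' c' s'" "la (Suc n) r c s \<le> la (Suc n) r' c' s'"
      "1 - ta (Suc n) r c s \<le> 1 - ta (Suc n) r' c' s'"
      using mono_al[of "Suc n"] mono_la[of "Suc n"] mono_ta[of "Suc n"] len le
      unfolding mono_past_def by auto
    moreover have "p (Suc n) = p' (Suc n)"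
      using agree False by metis
    ultimately show ?thesis
      using h le by (auto intro!: list_all2_appendI)
  qed
qed

lemma measurable_hist:
  assumes "\<And>j. 1 \<le> j \<Longrightarrow> j \<le> n \<Longrightarrow> (\<lambda>x. F x j) \<in> borel_measurable N"
  shows "(\<lambda>x. hist al la ta (F x) n) \<in> N \<rightarrow>\<^sub>M count_space UNIV"
  using assms by (induction n) (simp_all split: prod.split)

section \<open>Conditional expectations, independence and a scaling inequality\<close>

lemma (in prob_space) real_cond_exp_le_on:
  fixes f g :: "'a \<Rightarrow> real"
  assumes sub: "subalgebra M F" and E: "E \<in> sets F"
    and [measurable]: "integrable M f" "integrable M g"
    and le: "\<And>A. A \<in> sets F \<Longrightarrow> A \<subseteq> E \<Longrightarrow>
               (\<integral>x. indicator A x * f x \<partial>M) \<le> (\<integral>x. indicator A x * g x \<partial>M)"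
  shows "AE x in M. x \<in> E \<longrightarrow> real_cond_exp M F f x \<le> real_cond_exp M F g x"
proof -
  interpret finite_measure_subalgebra M F
    by unfold_locales (use sub in auto)
  have FM: "sets F \<subseteq> sets M" "space F = space M"
    using sub by (auto simp: subalgebra_def)
  define cf where "cf = real_cond_exp M F f"
  define cg where "cg = real_cond_exp M F g"
  have [measurable]: "cf \<in> borel_measurable F" "cg \<in> borel_measurable F"
    "cf \<in> borel_measurable M" "cg \<in> borel_measurable M"
    unfolding cf_def cg_def by measurable
  define X where "X = E \<inter> {x \<in> space F. cg x < cf x}"
  have XF: "X \<in> sets F"
    unfolding X_def using E by measurable
  then have XM[measurable]: "X \<in> sets M"
    using FM by auto
  have int: "integrable M cf" "integrable M cg"
    unfolding cf_def cg_def by (simp_all add: real_cond_exp_int(1) assms(3,4))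
  have "(\<integral>x. indicator X x * cf x \<partial>M) = (\<integral>x. indicator X x * f x \<partial>M)"
    unfolding cf_def using integrable_mult_indicator[OF XM assms(3)]
    by (intro real_cond_exp_intg(2)) (simp_all add: XF borel_measurable_indicator)
  also have "\<dots> \<le> (\<integral>x. indicator X x * g x \<partial>M)"
    by (rule le[OF XF]) (auto simp: X_def)
  also have "\<dots> = (\<integral>x. indicator X x * cg x \<partial>M)"
    unfolding cg_def using integrable_mult_indicator[OF XM assms(4)]
    by (intro real_cond_exp_intg(2)[symmetric]) (simp_all add: XF borel_measurable_indicator)
  finally have "(\<integral>x. indicator X x * (cf x - cg x) \<partial>M) \<le> 0"
    using int by (simp add: right_diff_distrib integrable_real_mult_indicator mult.commute)
  moreover have nonneg: "AE x in M. 0 \<le> indicator X x * (cf x - cg x)"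
    by (auto simp: X_def indicator_def)
  moreover have "integrable M (\<lambda>x. indicator X x * (cf x - cg x))"
    using integrable_mult_indicator[OF XM Bochner_Integration.integrable_diff[OF int]] by simp
  ultimately have "AE x in M. indicator X x * (cf x - cg x) = 0"
    using integral_nonneg_AE[OF nonneg] integral_nonneg_eq_0_iff_AE by (metis order_antisym)
  moreover have "AE x in M. x \<in> space M"
    by simp
  ultimately show ?thesis
    unfolding cf_def[symmetric] cg_def[symmetric]
    by eventually_elim (auto simp: X_def indicator_def FM split: if_splits)
qed

lemma (in prob_space) integral_indep_restrict_mult:
  fixes X :: "'i \<Rightarrow> 'a \<Rightarrow> real" and \<Phi> :: "('i \<Rightarrow> real) \<Rightarrow> real" and \<psi> :: "real \<Rightarrow> real"
  assumes indep: "indep_vars (\<lambda>_. borel) X I" and "J \<subseteq> I" "i \<in> I" "i \<notin> J"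
    and [measurable]: "\<Phi> \<in> borel_measurable (PiM J (\<lambda>_. borel))" and "\<And>x. \<bar>\<Phi> x\<bar> \<le> B"
    and [measurable]: "\<psi> \<in> borel_measurable borel" and "\<And>y. \<bar>\<psi> y\<bar> \<le> C"
  shows "(\<integral>\<omega>. \<Phi> (restrict (\<lambda>j. X j \<omega>) J) * \<psi> (X i \<omega>) \<partial>M)
       = (\<integral>\<omega>. \<Phi> (restrict (\<lambda>j. X j \<omega>) J) \<partial>M) * (\<integral>\<omega>. \<psi> (X i \<omega>) \<partial>M)"
proof -
  have [measurable]: "\<And>j. j \<in> I \<Longrightarrow> X j \<in> borel_measurable M"
    using indep unfolding indep_vars_def by auto
  have "indep_vars (\<lambda>b. PiM (case_bool J {i} b) (\<lambda>_. borel))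
          (\<lambda>b \<omega>. restrict (\<lambda>j. X j \<omega>) (case_bool J {i} b)) UNIV"
    by (rule indep_vars_restrict[OF indep])
       (use assms(2-4) in \<open>auto simp: disjoint_family_on_def split: bool.split\<close>)
  moreover have "(\<lambda>b. PiM (case_bool J {i} b) (\<lambda>_. borel))
      = case_bool (PiM J (\<lambda>_. borel)) (PiM {i} (\<lambda>_. borel :: real measure))"
    "(\<lambda>b \<omega>. restrict (\<lambda>j. X j \<omega>) (case_bool J {i} b))
      = case_bool (\<lambda>\<omega>. restrict (\<lambda>j. X j \<omega>) J) (\<lambda>\<omega>. restrict (\<lambda>j. X j \<omega>) {i})"
    by (auto split: bool.split)
  ultimately have "indep_var (PiM J (\<lambda>_. borel)) (\<lambda>\<omega>. restrict (\<lambda>j. X j \<omega>) J)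
               (PiM {i} (\<lambda>_. borel)) (\<lambda>\<omega>. restrict (\<lambda>j. X j \<omega>) {i})"
    unfolding indep_var_def by simp
  then have "indep_var borel (\<Phi> \<circ> (\<lambda>\<omega>. restrict (\<lambda>j. X j \<omega>) J))
               borel ((\<lambda>x. \<psi> (x i)) \<circ> (\<lambda>\<omega>. restrict (\<lambda>j. X j \<omega>) {i}))"
    by (rule indep_var_compose) measurable
  then have "indep_var borel (\<lambda>\<omega>. \<Phi> (restrict (\<lambda>j. X j \<omega>) J)) borel (\<lambda>\<omega>. \<psi> (X i \<omega>))"
    by (simp add: comp_def)
  moreover have "(\<lambda>\<omega>. restrict (\<lambda>j. X j \<omega>) J) \<in> M \<rightarrow>\<^sub>M PiM J (\<lambda>_. borel)"
    using assms(2) by (auto intro!: measurable_restrict)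
  then have "integrable M (\<lambda>\<omega>. \<Phi> (restrict (\<lambda>j. X j \<omega>) J))"
    by (intro integrable_const_bound[where B=B]) (use assms(6) in auto)
  moreover have "integrable M (\<lambda>\<omega>. \<psi> (X i \<omega>))"
    by (intro integrable_const_bound[where B=C]) (use assms(3,8) in auto)
  ultimately show ?thesis
    by (rule indep_var_lebesgue_integral)
qed

lemma le_ratio_if_scaling_bound:
  fixes F :: "real \<Rightarrow> real"
  assumes mono: "mono F" and le_1: "\<And>a. F a \<le> 1" and F_1: "F 1 = 1"
    and scale: "\<And>x \<tau>. 0 < x \<Longrightarrow> x < 1 \<Longrightarrow> 0 < \<tau> \<Longrightarrow> \<tau> < 1 \<Longrightarrow> F (x * \<tau>) \<le> x * F \<tau>"
    and "0 \<le> y" "y \<le> u" "0 < u" "u \<le> 1"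
  shows "F y \<le> y / u * F u"
proof -
  have interior: "F y \<le> y / w * F w" if "0 < y" "y < w" "w < 1" for y w
    using scale[of "y / w" w] that by (simp add: divide_less_eq)
  consider "y = u" | "y = 0" | "0 < y" "y < u" "u < 1" | "0 < y" "y < u" "u = 1"
    using assms(5-8) by fastforce
  then show ?thesis
  proof cases
    case 1
    then show ?thesis using \<open>0 < u\<close> by simp
  next
    case 2
    have "F 0 \<le> w" if "0 < w" "w < 1" for w
    proof -
      have "F 0 \<le> F (w * (1 / 2))"
        using mono that by (simp add: monoD)
      also have "\<dots> \<le> w * F (1 / 2)"
        using scale[of w "1 / 2"] that by simp
      also have "\<dots> \<le> w"
        using le_1[of "1 / 2"] that by (simp add: mult_left_le)
      finally show ?thesis .
    qed
    then have "F 0 \<le> 0"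
      by (intro dense_ge_bounded[of 0 1]) auto
    then show ?thesis using 2 by simp
  next
    case 3
    then show ?thesis using interior by simp
  next
    case 4
    have "F y \<le> y"
    proof (cases "F y \<le> 0")
      case False
      have "w \<le> y / F y" if "y < w" "w < 1" for w
      proof -
        have "F y \<le> y / w * F w"
          using interior 4 that by simp
        also have "\<dots> \<le> y / w"
          using mult_left_le[OF le_1[of w]] 4 that by (simp add: divide_right_mono)
        finally show ?thesis
          using False that 4 by (simp add: field_simps)
      qed
      then have "1 \<le> y / F y"
        by (intro dense_le_bounded[of y 1]) (use 4 in auto)
      then show ?thesis
        using False by (simp add: field_simps)
    qed (use 4 in auto)
    then show ?thesis using 4 F_1 by simp
  qed
qed

lemma ratio_le_increment_ratio:
  fixes l u Fl Fu :: real
  assumes "0 \<le> l" "l < u" "Fl \<le> l / u * Fu"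
  shows "Fu / u \<le> (Fu - Fl) / (u - l)"
proof -
  have "u * Fl \<le> l * Fu"
    using assms by (simp add: field_simps)
  then have "Fu * (u - l) \<le> (Fu - Fl) * u"
    by (simp add: algebra_simps)
  then show ?thesis
    using assms by (simp add: divide_simps)
qed

section \<open>One step of ADDIS at a null index\<close>

locale addis_step = prob_space M
  for M :: "'a measure" +
  fixes P :: "nat \<Rightarrow> 'a \<Rightarrow> real" and al la ta :: level_fn and g :: "bool list \<Rightarrow> real"
    and T t :: nat
  assumes indep: "indep_vars (\<lambda>_. borel) P {1..}"
    and pval: "\<And>j \<omega>. j \<ge> 1 \<Longrightarrow> \<omega> \<in> space M \<Longrightarrow> P j \<omega> \<in> {0..1}"
    and g_mono: "\<And>r r'. length r = T \<Longrightarrow> list_all2 (\<le>) r r' \<Longrightarrow> g r \<le> g r'"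
    and mono_al: "\<And>s. s \<ge> 1 \<Longrightarrow> mono_past al s"
    and mono_la: "\<And>s. s \<ge> 1 \<Longrightarrow> mono_past la s"
    and mono_ta: "\<And>s. s \<ge> 1 \<Longrightarrow> mono_past (\<lambda>k r c s. 1 - ta k r c s) s"
    and range: "\<And>s r c q. s \<ge> 1 \<Longrightarrow> length r = s - 1 \<Longrightarrow> length c = s - 1 \<Longrightarrow> length q = s - 1 \<Longrightarrow>
                  al s r c q \<in> {0..1} \<and> la s r c q \<in> {0..1} \<and> ta s r c q \<in> {0..1}"
    and order: "\<And>s r c q. s \<ge> 1 \<Longrightarrow> length r = s - 1 \<Longrightarrow> length c = s - 1 \<Longrightarrow> length q = s - 1 \<Longrightarrow>
                  al s r c q \<le> la s r c q \<and> la s r c q < ta s r c q"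
    and t_pos: "1 \<le> t" and t_le_T: "t \<le> T"
    and cuc: "cond_unif_conservative M P al la ta t"
begin

abbreviation pvals :: "'a \<Rightarrow> nat \<Rightarrow> real" where
  "pvals \<omega> \<equiv> \<lambda>j. P j \<omega>"

abbreviation past :: "'a \<Rightarrow> bool list \<times> bool list \<times> bool list" where
  "past \<omega> \<equiv> hist al la ta (pvals \<omega>) (t - 1)"

lemma measurable_P [measurable]: "1 \<le> j \<Longrightarrow> P j \<in> borel_measurable M"
  using indep unfolding indep_vars_def by auto

lemma measurable_P_t [measurable]: "P t \<in> borel_measurable M"
  using measurable_P t_pos .

lemma measurable_hist_pvals [measurable]: "(\<lambda>\<omega>. hist al la ta (pvals \<omega>) n) \<in> M \<rightarrow>\<^sub>M count_space UNIV"
  by (rule measurable_hist) simp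

definition level :: "level_fn \<Rightarrow> bool list \<times> bool list \<times> bool list \<Rightarrow> real" where
  "level f h = (case h of (r, c, s) \<Rightarrow> f t r c s)"

lemma lev_eq_level: "lev al la ta f (pvals \<omega>) t = level f (past \<omega>)"
  by (simp add: lev_def level_def)

lemma measurable_level [measurable]: "(\<lambda>\<omega>. level f (past \<omega>)) \<in> borel_measurable M"
  by (rule measurable_compose_countable[OF _ measurable_hist_pvals]) simp

definition histories :: "(bool list \<times> bool list \<times> bool list) set" where
  "histories = {r. length r = t - 1} \<times> {c. length c = t - 1} \<times> {s. length s = t - 1}"

lemma finite_histories: "finite histories"
  unfolding histories_def by (intro finite_cartesian_product finite_list_length)

lemma hist_in_histories: "hist al la ta p (t - 1) \<in> histories"
  using length_hist[of al la ta p "t - 1"] unfolding histories_def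
  by (cases "hist al la ta p (t - 1)") auto

text \<open>The levels range over finitely many histories, so the gap between candidacy and selection
  thresholds is bounded away from zero; this makes all integrands below bounded.\<close>
definition gap :: real where
  "gap = Min ((\<lambda>h. level ta h - level la h) ` histories)"

lemma level_bounds:
  assumes "h \<in> histories"
  shows "0 \<le> level al h" "level al h \<le> level la h" "level la h < level ta h" "level ta h \<le> 1"
    and "gap \<le> level ta h - level la h"
proof -
  obtain r c s where h: "h = (r, c, s)" "length r = t - 1" "length c = t - 1" "length s = t - 1"
    using assms unfolding histories_def by auto
  show "0 \<le> level al h" "level al h \<le> level la h" "level la h < level ta h" "level ta h \<le> 1"
    using range[OF t_pos h(2-4)] order[OF t_pos h(2-4)] by (auto simp: level_def h(1))
  show "gap \<le> level ta h - level la h"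
    unfolding gap_def using finite_histories assms by (intro Min_le) auto
qed

lemma gap_pos: "0 < gap"
proof -
  have "gap \<in> (\<lambda>h. level ta h - level la h) ` histories"
    unfolding gap_def using finite_histories hist_in_histories by (intro Min_in) auto
  then show ?thesis
    using level_bounds(3) by auto
qed

definition denom :: "(nat \<Rightarrow> real) \<Rightarrow> real" where
  "denom p = max (g (fst (hist al la ta p T))) 1"

lemma denom_ge_1: "1 \<le> denom p"
  by (simp add: denom_def)

lemma measurable_denom:
  assumes "\<And>j. 1 \<le> j \<Longrightarrow> j \<le> T \<Longrightarrow> (\<lambda>x. F x j) \<in> borel_measurable N"
  shows "(\<lambda>x. denom (F x)) \<in> borel_measurable N"
  unfolding denom_def
  by (rule measurable_compose_countable[OF _ measurable_hist]) (use assms in auto)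

lemma measurable_denom_pvals [measurable]: "(\<lambda>\<omega>. denom (pvals \<omega>)) \<in> borel_measurable M"
  by (rule measurable_denom) simp

lemma denom_mono_at_t:
  assumes "hist_le (hist al la ta p t) (hist al la ta p' t)" and "\<And>j. j \<noteq> t \<Longrightarrow> p j = p' j"
  shows "denom p \<le> denom p'"
proof -
  obtain r c s r' c' s' where h: "hist al la ta p T = (r, c, s)" "hist al la ta p' T = (r', c', s')"
    by (metis prod_cases3)
  have "hist_le (hist al la ta p T) (hist al la ta p' T)"
    using hist_le_propagates[OF mono_al mono_la mono_ta] assms t_le_T by blast
  then have "g r \<le> g r'"
    using g_mono length_hist[OF h(1)] h by auto
  then show ?thesis
    unfolding denom_def h by simp
qed

lemma denom_fun_upd:
  assumes past: "hist al la ta p (t - 1) = h" and sel: "p t \<le> level ta h"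
  shows "denom (p(t := level ta h)) \<le> denom p" and "denom p \<le> denom (p(t := 0))"
    and "level la h < p t \<Longrightarrow> denom p = denom (p(t := level ta h))"
    and "p t \<le> level al h \<Longrightarrow> denom p = denom (p(t := 0))"
proof -
  obtain r c s where h: "h = (r, c, s)"
    by (metis prod_cases3)
  have "h \<in> histories"
    using past hist_in_histories by blast
  note bounds = level_bounds[OF this, unfolded h level_def prod.case]
  have "hist al la ta (p(t := v)) (t - 1) = (r, c, s)" for v
    using past h by (subst hist_cong[of _ _ p]) auto
  note snoc = hist_eq_snoc[OF t_pos this] hist_eq_snoc[OF t_pos past[unfolded h]]
  show top_le: "denom (p(t := level ta h)) \<le> denom p"
    by (rule denom_mono_at_t) (use bounds sel in \<open>auto simp: snoc h level_def list_all2_refl intro!: list_all2_appendI\<close>)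
  show le_zero: "denom p \<le> denom (p(t := 0))"
    by (rule denom_mono_at_t) (use bounds sel in \<open>auto simp: snoc h level_def list_all2_refl intro!: list_all2_appendI\<close>)
  show "denom p = denom (p(t := level ta h))" if "level la h < p t"
    by (rule order_antisym[OF denom_mono_at_t top_le])
       (use that bounds sel in \<open>auto simp: snoc h level_def list_all2_refl intro!: list_all2_appendI\<close>)
  show "denom p = denom (p(t := 0))" if "p t \<le> level al h"
    by (rule order_antisym[OF le_zero denom_mono_at_t])
       (use that bounds sel in \<open>auto simp: snoc h level_def list_all2_refl intro!: list_all2_appendI\<close>)
qed

lemma
  assumes [measurable]: "E \<in> M \<rightarrow>\<^sub>M count_space UNIV"
  shows sets_past_with:
      "sets (past_with M P al la ta t E)
         = {(\<lambda>\<omega>. (past \<omega>, E \<omega>)) -` B \<inter> space M | B. B \<in> sets (count_space UNIV)}"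
    and subalgebra_past_with: "subalgebra M (past_with M P al la ta t E)"
    and event_in_past_with: "{\<omega> \<in> space M. E \<omega>} \<in> sets (past_with M P al la ta t E)"
proof -
  have X: "(\<lambda>\<omega>. (past \<omega>, E \<omega>)) \<in> M \<rightarrow>\<^sub>M count_space UNIV"
    by measurable
  show sets: "sets (past_with M P al la ta t E)
         = {(\<lambda>\<omega>. (past \<omega>, E \<omega>)) -` B \<inter> space M | B. B \<in> sets (count_space UNIV)}"
    unfolding past_with_def by (rule sets_vimage_algebra2) auto
  show "subalgebra M (past_with M P al la ta t E)"
    unfolding subalgebra_def
  proof
    show "space (past_with M P al la ta t E) = space M"
      by (simp add: past_with_def)
    show "sets (past_with M P al la ta t E) \<subseteq> sets M"
      unfolding sets using measurable_sets[OF X] by auto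
  qed
  have "{\<omega> \<in> space M. E \<omega>} = (\<lambda>\<omega>. (past \<omega>, E \<omega>)) -` {z. snd z} \<inter> space M"
    by auto
  then show "{\<omega> \<in> space M. E \<omega>} \<in> sets (past_with M P al la ta t E)"
    unfolding sets by (intro CollectI exI[of _ "{z. snd z}"]) simp
qed

definition cdf :: "real \<Rightarrow> real" where
  "cdf v = prob {\<omega> \<in> space M. P t \<omega> \<le> v}"

lemma integral_of_bool_le: "(\<integral>\<omega>. of_bool (P t \<omega> \<le> v) \<partial>M) = cdf v"
proof -
  have "(\<integral>\<omega>. of_bool (P t \<omega> \<le> v) \<partial>M) = (\<integral>\<omega>. indicator {\<omega> \<in> space M. P t \<omega> \<le> v} \<omega> \<partial>M)"
    by (rule Bochner_Integration.integral_cong) (auto simp: indicator_def)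
  also have "\<dots> = cdf v"
    using t_pos by (simp add: cdf_def Int_absorb2)
  finally show ?thesis .
qed

lemma integral_of_bool_between:
  assumes "l \<le> u"
  shows "(\<integral>\<omega>. of_bool (l < P t \<omega> \<and> P t \<omega> \<le> u) \<partial>M) = cdf u - cdf l"
proof -
  have "(\<integral>\<omega>. of_bool (l < P t \<omega> \<and> P t \<omega> \<le> u) \<partial>M)
      = (\<integral>\<omega>. indicator ({\<omega> \<in> space M. P t \<omega> \<le> u} - {\<omega> \<in> space M. P t \<omega> \<le> l}) \<omega> \<partial>M)"
    by (rule Bochner_Integration.integral_cong) (auto simp: indicator_def)
  also have "\<dots> = prob ({\<omega> \<in> space M. P t \<omega> \<le> u} - {\<omega> \<in> space M. P t \<omega> \<le> l})"
    using t_pos by (simp add: Int_absorb2 Diff_subset[THEN subset_trans])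
  also have "\<dots> = cdf u - cdf l"
    unfolding cdf_def by (rule finite_measure_Diff) (use assms t_pos in auto)
  finally show ?thesis .
qed

text \<open>The event \<open>P\<^sub>t \<le> \<tau>\<close> belongs to the conditioning sigma-algebra, so integrating the
  conditional bound over it yields an unconditional bound.\<close>
lemma cdf_scaling:
  assumes x: "0 < x" "x < 1" and \<tau>: "0 < \<tau>" "\<tau> < 1"
  shows "cdf (x * \<tau>) \<le> x * cdf \<tau>"
proof -
  define E where "E = (\<lambda>\<omega>. P t \<omega> \<le> \<tau>)"
  have [measurable]: "E \<in> M \<rightarrow>\<^sub>M count_space UNIV"
    unfolding E_def using t_pos by measurable
  define G where "G = past_with M P al la ta t E"
  interpret finite_measure_subalgebra M G
    by unfold_locales (use subalgebra_past_with[of E] in \<open>auto simp: G_def\<close>)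
  define S where "S = {\<omega> \<in> space M. E \<omega>}"
  have SG: "S \<in> sets G"
    unfolding S_def G_def by (rule event_in_past_with) measurable
  have SM [measurable]: "S \<in> sets M"
    unfolding S_def by measurable
  define f where "f = (\<lambda>\<omega>. of_bool (P t \<omega> / \<tau> \<le> x) :: real)"
  have f_meas [measurable]: "f \<in> borel_measurable M"
    unfolding f_def of_bool_def using t_pos by measurable
  have f_int: "integrable M f"
    by (rule integrable_const_bound[where B=1, OF _ f_meas]) (simp add: f_def)
  have cond: "AE \<omega> in M. P t \<omega> \<le> \<tau> \<longrightarrow> real_cond_exp M G f \<omega> \<le> x"
    using cuc x \<tau> unfolding cond_unif_conservative_def G_def E_def f_def by blast
  have "cdf (x * \<tau>) = (\<integral>\<omega>. indicator S \<omega> * f \<omega> \<partial>M)"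
  proof -
    have "indicator S \<omega> * f \<omega> = of_bool (P t \<omega> \<le> x * \<tau>)" if "\<omega> \<in> space M" for \<omega>
    proof -
      have "P t \<omega> / \<tau> \<le> x \<longleftrightarrow> P t \<omega> \<le> x * \<tau>"
        using \<tau> by (simp add: divide_le_eq)
      moreover have "x * \<tau> \<le> \<tau>"
        using x \<tau> by simp
      ultimately show ?thesis
        using that by (auto simp: S_def E_def f_def indicator_def)
    qed
    then show ?thesis
      by (simp add: integral_of_bool_le[symmetric] cong: Bochner_Integration.integral_cong)
  qed
  also have "\<dots> = (\<integral>\<omega>. indicator S \<omega> * real_cond_exp M G f \<omega> \<partial>M)"
    using integrable_mult_indicator[OF SM f_int]
    by (intro real_cond_exp_intg(2)[symmetric]) (simp_all add: SG borel_measurable_indicator)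
  also have "\<dots> \<le> (\<integral>\<omega>. indicator S \<omega> * x \<partial>M)"
  proof (rule integral_mono_AE)
    show "integrable M (\<lambda>\<omega>. indicator S \<omega> * real_cond_exp M G f \<omega>)"
      using integrable_mult_indicator[OF SM real_cond_exp_int(1)[OF f_int]] by simp
    show "integrable M (\<lambda>\<omega>. indicator S \<omega> * x)"
      using integrable_real_mult_indicator[OF SM integrable_const[of x]] by (simp add: mult.commute)
    show "AE \<omega> in M. indicator S \<omega> * real_cond_exp M G f \<omega> \<le> indicator S \<omega> * x"
      using cond by eventually_elim (auto simp: indicator_def S_def E_def)
  qed
  also have "\<dots> = x * cdf \<tau>"
    using SM by (simp add: cdf_def S_def E_def mult.commute)
  finally show ?thesis .
qed

lemma cdf_le_ratio:
  assumes "0 \<le> y" "y \<le> u" "0 < u" "u \<le> 1"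
  shows "cdf y \<le> y / u * cdf u"
proof (rule le_ratio_if_scaling_bound[OF _ _ _ cdf_scaling assms])
  show "mono cdf"
    unfolding cdf_def by (intro monoI finite_measure_mono) (use t_pos in auto)
  show "cdf a \<le> 1" for a
    unfolding cdf_def by simp
  have "{\<omega> \<in> space M. P t \<omega> \<le> 1} = space M"
    using pval[OF t_pos] by auto
  then show "cdf 1 = 1"
    unfolding cdf_def by (simp add: prob_space)
qed

definition selected :: "'a \<Rightarrow> bool" where
  "selected \<omega> \<longleftrightarrow> P t \<omega> \<le> level ta (past \<omega>)"

definition past_sel :: "'a measure" where
  "past_sel = past_with M P al la ta t selected"

definition est_term :: "'a \<Rightarrow> real" where
  "est_term \<omega> = level al (past \<omega>) * of_bool (level la (past \<omega>) < P t \<omega> \<and> P t \<omega> \<le> level ta (past \<omega>))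
                 / ((level ta (past \<omega>) - level la (past \<omega>)) * denom (pvals \<omega>))"

definition level_term :: "'a \<Rightarrow> real" where
  "level_term \<omega> = level al (past \<omega>) / (level ta (past \<omega>) * denom (pvals \<omega>))"

definition rej_term :: "'a \<Rightarrow> real" where
  "rej_term \<omega> = of_bool (P t \<omega> \<le> level al (past \<omega>)) / denom (pvals \<omega>)"

lemma measurable_selected [measurable]: "selected \<in> M \<rightarrow>\<^sub>M count_space UNIV"
  unfolding selected_def by measurable

lemma measurable_est_term [measurable]: "est_term \<in> borel_measurable M"
  unfolding est_term_def by measurable

lemma measurable_level_term [measurable]: "level_term \<in> borel_measurable M"
  unfolding level_term_def by measurable

lemma measurable_rej_term [measurable]: "rej_term \<in> borel_measurable M"
  unfolding rej_term_def by measurable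

lemma abs_terms_le:
  "\<bar>est_term \<omega>\<bar> \<le> 1 / gap" "\<bar>level_term \<omega>\<bar> \<le> 1 / gap" "\<bar>rej_term \<omega>\<bar> \<le> 1"
proof -
  let ?a = "level al (past \<omega>)" and ?l = "level la (past \<omega>)" and ?u = "level ta (past \<omega>)"
    and ?D = "denom (pvals \<omega>)"
  note bounds = level_bounds[OF hist_in_histories[of "pvals \<omega>"]]
  have D: "1 \<le> ?D"
    by (rule denom_ge_1)
  have gap_le: "gap \<le> (?u - ?l) * ?D"
    using mult_mono[OF bounds(5) D] bounds(3) gap_pos by simp
  also have "\<dots> \<le> ?u * ?D"
    using bounds(1,2) D by (intro mult_right_mono) auto
  finally have gap_le_u: "gap \<le> ?u * ?D" .
  have num: "0 \<le> ?a * of_bool (?l < P t \<omega> \<and> P t \<omega> \<le> ?u)" "?a * of_bool (?l < P t \<omega> \<and> P t \<omega> \<le> ?u) \<le> 1"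
    using bounds by auto
  have "0 \<le> est_term \<omega>" "est_term \<omega> \<le> 1 / gap"
    unfolding est_term_def using num gap_le gap_pos by (auto intro!: divide_nonneg_pos frac_le)
  then show "\<bar>est_term \<omega>\<bar> \<le> 1 / gap"
    by simp
  have "0 \<le> level_term \<omega>" "level_term \<omega> \<le> 1 / gap"
    unfolding level_term_def using bounds gap_le_u gap_pos by (auto intro!: divide_nonneg_pos frac_le)
  then show "\<bar>level_term \<omega>\<bar> \<le> 1 / gap"
    by simp
  show "\<bar>rej_term \<omega>\<bar> \<le> 1"
    unfolding rej_term_def using D by simp
qed

lemma integrable_terms: "integrable M est_term" "integrable M level_term" "integrable M rej_term"
  using abs_terms_le
  by (auto intro: integrable_const_bound[where B="1 / gap"] integrable_const_bound[where B=1])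

definition frozen_weight :: "bool list \<times> bool list \<times> bool list \<Rightarrow> real \<Rightarrow> 'a \<Rightarrow> real" where
  "frozen_weight h v \<omega> = of_bool (past \<omega> = h) / denom ((pvals \<omega>)(t := v))"

lemma frozen_weight_bounds: "0 \<le> frozen_weight h v \<omega>" "frozen_weight h v \<omega> \<le> 1"
  using denom_ge_1[of "(pvals \<omega>)(t := v)"] by (auto simp: frozen_weight_def)

lemma measurable_frozen_weight [measurable]: "frozen_weight h v \<in> borel_measurable M"
proof -
  have "(\<lambda>\<omega>. denom ((pvals \<omega>)(t := v))) \<in> borel_measurable M"
    by (rule measurable_denom) (auto simp: fun_upd_def)
  then show ?thesis
    unfolding frozen_weight_def by measurable
qed

lemma integrable_frozen_weight_of_bool:
  assumes "Measurable.pred M Q"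
  shows "integrable M (\<lambda>\<omega>. c * (frozen_weight h v \<omega> * of_bool (Q \<omega>)))"
proof (intro integrable_mult_right integrable_const_bound[where B=1])
  show "AE \<omega> in M. norm (frozen_weight h v \<omega> * of_bool (Q \<omega>)) \<le> 1"
    using frozen_weight_bounds by simp
qed (use assms in measurable)

text \<open>With \<open>P\<^sub>t\<close> frozen, the weight is a function of the other p-values only, hence
  independent of \<open>P\<^sub>t\<close>.\<close>
lemma integral_frozen_weight_mult:
  assumes [measurable]: "\<psi> \<in> borel_measurable borel" and "\<And>y. \<bar>\<psi> y\<bar> \<le> 1"
  shows "(\<integral>\<omega>. frozen_weight h v \<omega> * \<psi> (P t \<omega>) \<partial>M)
       = (\<integral>\<omega>. frozen_weight h v \<omega> \<partial>M) * (\<integral>\<omega>. \<psi> (P t \<omega>) \<partial>M)"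
proof -
  define J where "J = {1..T} - {t}"
  define \<Phi> where "\<Phi> x = of_bool (hist al la ta (x(t := v)) (t - 1) = h) / denom (x(t := v))" for x
  have restrict: "\<Phi> (restrict (pvals \<omega>) J) = frozen_weight h v \<omega>" for \<omega>
  proof -
    have "hist al la ta ((restrict (pvals \<omega>) J)(t := v)) (t - 1) = past \<omega>"
      by (rule hist_cong) (use t_le_T in \<open>auto simp: J_def\<close>)
    moreover have "hist al la ta ((restrict (pvals \<omega>) J)(t := v)) T = hist al la ta ((pvals \<omega>)(t := v)) T"
      by (rule hist_cong) (auto simp: J_def)
    ultimately show ?thesis
      by (simp add: \<Phi>_def frozen_weight_def denom_def)
  qed
  have coord: "(\<lambda>x. (x(t := v)) j) \<in> borel_measurable (PiM J (\<lambda>_. borel))" if "1 \<le> j" "j \<le> T" for j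
    using that by (cases "j = t") (auto simp: J_def)
  have [measurable]: "(\<lambda>x. hist al la ta (x(t := v)) (t - 1)) \<in> PiM J (\<lambda>_. borel) \<rightarrow>\<^sub>M count_space UNIV"
    by (rule measurable_hist) (use coord t_le_T in auto)
  have [measurable]: "(\<lambda>x. denom (x(t := v))) \<in> borel_measurable (PiM J (\<lambda>_. borel))"
    by (rule measurable_denom) (use coord in auto)
  have "\<Phi> \<in> borel_measurable (PiM J (\<lambda>_. borel))"
    unfolding \<Phi>_def by measurable
  moreover have "\<bar>\<Phi> x\<bar> \<le> 1" for x
    using denom_ge_1[of "x(t := v)"] by (auto simp: \<Phi>_def)
  ultimately have "(\<integral>\<omega>. \<Phi> (restrict (pvals \<omega>) J) * \<psi> (P t \<omega>) \<partial>M)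
       = (\<integral>\<omega>. \<Phi> (restrict (pvals \<omega>) J) \<partial>M) * (\<integral>\<omega>. \<psi> (P t \<omega>) \<partial>M)"
    by (intro integral_indep_restrict_mult[OF indep]) (use assms t_pos in \<open>auto simp: J_def\<close>)
  then show ?thesis
    unfolding restrict .
qed

lemma integral_frozen_weight_le:
  "(\<integral>\<omega>. frozen_weight h v \<omega> * of_bool (P t \<omega> \<le> u) \<partial>M) = (\<integral>\<omega>. frozen_weight h v \<omega> \<partial>M) * cdf u"
  using integral_frozen_weight_mult[of "\<lambda>y. of_bool (y \<le> u)"] by (simp add: integral_of_bool_le)

lemma integral_frozen_weight_between:
  assumes "l \<le> u"
  shows "(\<integral>\<omega>. frozen_weight h v \<omega> * of_bool (l < P t \<omega> \<and> P t \<omega> \<le> u) \<partial>M)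
       = (\<integral>\<omega>. frozen_weight h v \<omega> \<partial>M) * (cdf u - cdf l)"
  using integral_frozen_weight_mult[of "\<lambda>y. of_bool (l < y \<and> y \<le> u)"] assms
  by (simp add: integral_of_bool_between)

definition atom :: "bool list \<times> bool list \<times> bool list \<Rightarrow> 'a set" where
  "atom h = {\<omega> \<in> space M. past \<omega> = h \<and> P t \<omega> \<le> level ta h}"

lemma sets_atom [measurable]: "atom h \<in> sets M"
  unfolding atom_def by measurable

lemma terms_on_atom:
  assumes \<omega>: "\<omega> \<in> atom h" and h: "h \<in> histories"
  shows "est_term \<omega>
           = level al h / (level ta h - level la h) * (frozen_weight h (level ta h) \<omega> * of_bool (level la h < P t \<omega>))"
    and "level_term \<omega> \<le> level al h / level ta h * frozen_weight h (level ta h) \<omega>"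
    and "level al h / level ta h * frozen_weight h 0 \<omega> \<le> level_term \<omega>"
    and "rej_term \<omega> = frozen_weight h 0 \<omega> * of_bool (P t \<omega> \<le> level al h)"
proof -
  have past: "past \<omega> = h" and sel: "P t \<omega> \<le> level ta h"
    using \<omega> by (auto simp: atom_def)
  note bounds = level_bounds[OF h] and D = denom_fun_upd[OF past sel]
  have W: "frozen_weight h v \<omega> = 1 / denom ((pvals \<omega>)(t := v))" for v
    using past by (simp add: frozen_weight_def)
  have D_pos: "0 < denom p" for p
    using denom_ge_1[of p] by simp
  show "est_term \<omega>
           = level al h / (level ta h - level la h) * (frozen_weight h (level ta h) \<omega> * of_bool (level la h < P t \<omega>))"
    using past sel D(3) by (cases "level la h < P t \<omega>") (simp_all add: est_term_def W)
  show "level_term \<omega> \<le> level al h / level ta h * frozen_weight h (level ta h) \<omega>"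
    using past D(1) D_pos bounds
    by (simp add: level_term_def W divide_left_mono mult_left_mono mult_pos_pos)
  show "level al h / level ta h * frozen_weight h 0 \<omega> \<le> level_term \<omega>"
    using past D(2) D_pos bounds
    by (simp add: level_term_def W divide_left_mono mult_left_mono mult_pos_pos)
  show "rej_term \<omega> = frozen_weight h 0 \<omega> * of_bool (P t \<omega> \<le> level al h)"
    using past D(4) by (cases "P t \<omega> \<le> level al h") (simp_all add: rej_term_def W)
qed

lemma indicator_atom_mult:
  assumes \<omega>: "\<omega> \<in> space M" and h: "h \<in> histories"
  shows "indicator (atom h) \<omega> * est_term \<omega>
           = level al h / (level ta h - level la h)
             * (frozen_weight h (level ta h) \<omega> * of_bool (level la h < P t \<omega> \<and> P t \<omega> \<le> level ta h))"
    and "indicator (atom h) \<omega> * level_term \<omega>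
           \<le> level al h / level ta h * (frozen_weight h (level ta h) \<omega> * of_bool (P t \<omega> \<le> level ta h))"
    and "level al h / level ta h * (frozen_weight h 0 \<omega> * of_bool (P t \<omega> \<le> level ta h))
           \<le> indicator (atom h) \<omega> * level_term \<omega>"
    and "indicator (atom h) \<omega> * rej_term \<omega> = frozen_weight h 0 \<omega> * of_bool (P t \<omega> \<le> level al h)"
proof -
  note bounds = level_bounds[OF h] and on_atom = terms_on_atom[OF _ h]
  have sel: "P t \<omega> \<le> level ta h" if "\<omega> \<in> atom h"
    using that by (simp add: atom_def)
  have off: "frozen_weight h v \<omega> = 0 \<or> level ta h < P t \<omega>" if "\<omega> \<notin> atom h" for v
    using that \<omega> by (auto simp: atom_def frozen_weight_def)
  show "indicator (atom h) \<omega> * est_term \<omega>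
           = level al h / (level ta h - level la h)
             * (frozen_weight h (level ta h) \<omega> * of_bool (level la h < P t \<omega> \<and> P t \<omega> \<le> level ta h))"
    using on_atom(1) sel off by (cases "\<omega> \<in> atom h") auto
  show "indicator (atom h) \<omega> * level_term \<omega>
           \<le> level al h / level ta h * (frozen_weight h (level ta h) \<omega> * of_bool (P t \<omega> \<le> level ta h))"
    using on_atom(2) sel off by (cases "\<omega> \<in> atom h") auto
  show "level al h / level ta h * (frozen_weight h 0 \<omega> * of_bool (P t \<omega> \<le> level ta h))
           \<le> indicator (atom h) \<omega> * level_term \<omega>"
    using on_atom(3) sel off by (cases "\<omega> \<in> atom h") auto
  show "indicator (atom h) \<omega> * rej_term \<omega> = frozen_weight h 0 \<omega> * of_bool (P t \<omega> \<le> level al h)"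
    using on_atom(4) off bounds by (cases "\<omega> \<in> atom h") auto
qed


lemma integral_atom_level_le_est:
  assumes h: "h \<in> histories"
  shows "(\<integral>\<omega>. indicator (atom h) \<omega> * level_term \<omega> \<partial>M) \<le> (\<integral>\<omega>. indicator (atom h) \<omega> * est_term \<omega> \<partial>M)"
proof -
  let ?a = "level al h" and ?l = "level la h" and ?u = "level ta h"
    and ?EW = "\<integral>\<omega>. frozen_weight h (level ta h) \<omega> \<partial>M"
  note bounds = level_bounds[OF h]
  have EW: "0 \<le> ?EW"
    using frozen_weight_bounds by simp
  have "integrable M (\<lambda>\<omega>. ?a / ?u * (frozen_weight h ?u \<omega> * of_bool (P t \<omega> \<le> ?u)))"
    by (rule integrable_frozen_weight_of_bool) measurable
  then have "(\<integral>\<omega>. indicator (atom h) \<omega> * level_term \<omega> \<partial>M)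
      \<le> (\<integral>\<omega>. ?a / ?u * (frozen_weight h ?u \<omega> * of_bool (P t \<omega> \<le> ?u)) \<partial>M)"
    using indicator_atom_mult(2)[OF _ h] integrable_mult_indicator[OF sets_atom integrable_terms(2)]
    by (intro integral_mono) simp_all
  also have "\<dots> = ?a * ?EW * (cdf ?u / ?u)"
    by (simp add: integral_frozen_weight_le)
  also have "\<dots> \<le> ?a * ?EW * ((cdf ?u - cdf ?l) / (?u - ?l))"
    using bounds EW
    by (intro mult_left_mono ratio_le_increment_ratio cdf_le_ratio) auto
  also have "\<dots> = (\<integral>\<omega>. ?a / (?u - ?l) * (frozen_weight h ?u \<omega> * of_bool (?l < P t \<omega> \<and> P t \<omega> \<le> ?u)) \<partial>M)"
    using bounds by (simp add: integral_frozen_weight_between)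
  also have "\<dots> = (\<integral>\<omega>. indicator (atom h) \<omega> * est_term \<omega> \<partial>M)"
    by (intro Bochner_Integration.integral_cong) (simp_all add: indicator_atom_mult(1)[OF _ h])
  finally show ?thesis .
qed

lemma integral_atom_rej_le_level:
  assumes h: "h \<in> histories"
  shows "(\<integral>\<omega>. indicator (atom h) \<omega> * rej_term \<omega> \<partial>M) \<le> (\<integral>\<omega>. indicator (atom h) \<omega> * level_term \<omega> \<partial>M)"
proof -
  let ?a = "level al h" and ?u = "level ta h" and ?EW = "\<integral>\<omega>. frozen_weight h 0 \<omega> \<partial>M"
  note bounds = level_bounds[OF h]
  have EW: "0 \<le> ?EW"
    using frozen_weight_bounds by simp
  have "(\<integral>\<omega>. indicator (atom h) \<omega> * rej_term \<omega> \<partial>M) = ?EW * cdf ?a"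
    by (simp add: indicator_atom_mult(4)[OF _ h] integral_frozen_weight_le cong: Bochner_Integration.integral_cong)
  also have "\<dots> \<le> ?EW * (?a / ?u * cdf ?u)"
    using bounds EW by (intro mult_left_mono cdf_le_ratio) auto
  also have "\<dots> = (\<integral>\<omega>. ?a / ?u * (frozen_weight h 0 \<omega> * of_bool (P t \<omega> \<le> ?u)) \<partial>M)"
    by (simp add: integral_frozen_weight_le)
  also have "\<dots> \<le> (\<integral>\<omega>. indicator (atom h) \<omega> * level_term \<omega> \<partial>M)"
    using integrable_frozen_weight_of_bool[of "\<lambda>\<omega>. P t \<omega> \<le> ?u" "?a / ?u" h 0]
      indicator_atom_mult(3)[OF _ h] integrable_mult_indicator[OF sets_atom integrable_terms(2)]
    by (intro integral_mono) simp_all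
  finally show ?thesis .
qed

lemma disjoint_family_atom: "disjoint_family atom"
  unfolding disjoint_family_on_def atom_def by auto

lemma past_sel_set_eq_Union_atoms:
  assumes A: "A \<in> sets past_sel" and sel: "A \<subseteq> {\<omega> \<in> space M. selected \<omega>}"
  shows "A = (\<Union>h \<in> past ` A. atom h)"
proof
  show "A \<subseteq> (\<Union>h \<in> past ` A. atom h)"
    using sel by (auto simp: atom_def selected_def)
  obtain B where B: "A = (\<lambda>\<omega>. (past \<omega>, selected \<omega>)) -` B \<inter> space M"
    using A sets_past_with[OF measurable_selected] unfolding past_sel_def by auto
  show "(\<Union>h \<in> past ` A. atom h) \<subseteq> A"
  proof
    fix \<omega> assume "\<omega> \<in> (\<Union>h \<in> past ` A. atom h)"
    then obtain \<omega>' where "\<omega>' \<in> A" and "\<omega> \<in> atom (past \<omega>')"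
      by auto
    then have "(past \<omega>, selected \<omega>) = (past \<omega>', selected \<omega>')" and "\<omega> \<in> space M"
      using sel by (auto simp: atom_def selected_def)
    then show "\<omega> \<in> A"
      using \<open>\<omega>' \<in> A\<close> unfolding B by auto
  qed
qed

lemma integral_past_sel_set_eq_sum_atoms:
  fixes f :: "'a \<Rightarrow> real"
  assumes A: "A \<in> sets past_sel" "A \<subseteq> {\<omega> \<in> space M. selected \<omega>}" and f: "integrable M f"
  shows "(\<integral>\<omega>. indicator A \<omega> * f \<omega> \<partial>M) = (\<Sum>h \<in> past ` A. \<integral>\<omega>. indicator (atom h) \<omega> * f \<omega> \<partial>M)"
proof -
  have fin: "finite (past ` A)"
    by (rule finite_subset[OF image_subsetI[OF hist_in_histories] finite_histories])
  have Union: "(\<Union>h \<in> past ` A. atom h) = A"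
    by (rule past_sel_set_eq_Union_atoms[OF A, symmetric])
  have "indicator A \<omega> = (\<Sum>h \<in> past ` A. indicator (atom h) \<omega> :: real)" for \<omega>
    using indicator_UN_disjoint[OF fin disjoint_family_on_mono[OF subset_UNIV disjoint_family_atom], of \<omega>]
    by (simp only: Union)
  then have "(\<integral>\<omega>. indicator A \<omega> * f \<omega> \<partial>M) = (\<integral>\<omega>. (\<Sum>h \<in> past ` A. indicator (atom h) \<omega> * f \<omega>) \<partial>M)"
    by (simp add: sum_distrib_right)
  also have "\<dots> = (\<Sum>h \<in> past ` A. \<integral>\<omega>. indicator (atom h) \<omega> * f \<omega> \<partial>M)"
    using integrable_mult_indicator[OF sets_atom f] by (intro Bochner_Integration.integral_sum) simp
  finally show ?thesis .
qed

lemma cond_exp_terms_ordered: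
  "AE \<omega> in M. selected \<omega> \<longrightarrow>
     real_cond_exp M past_sel level_term \<omega> \<le> real_cond_exp M past_sel est_term \<omega>
     \<and> real_cond_exp M past_sel rej_term \<omega> \<le> real_cond_exp M past_sel level_term \<omega>"
proof -
  have sub: "subalgebra M past_sel" and S: "{\<omega> \<in> space M. selected \<omega>} \<in> sets past_sel"
    unfolding past_sel_def by (simp_all add: subalgebra_past_with event_in_past_with)
  note decompose = integral_past_sel_set_eq_sum_atoms
  have past_A: "past ` A \<subseteq> histories" for A
    by (rule image_subsetI[OF hist_in_histories])
  have "AE \<omega> in M. \<omega> \<in> {\<omega> \<in> space M. selected \<omega>} \<longrightarrow>
          real_cond_exp M past_sel level_term \<omega> \<le> real_cond_exp M past_sel est_term \<omega>"
  proof (rule real_cond_exp_le_on[OF sub S integrable_terms(2,1)])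
    fix A assume A: "A \<in> sets past_sel" "A \<subseteq> {\<omega> \<in> space M. selected \<omega>}"
    show "(\<integral>\<omega>. indicator A \<omega> * level_term \<omega> \<partial>M) \<le> (\<integral>\<omega>. indicator A \<omega> * est_term \<omega> \<partial>M)"
      unfolding decompose[OF A integrable_terms(1)] decompose[OF A integrable_terms(2)]
      using past_A by (intro sum_mono integral_atom_level_le_est) blast
  qed
  moreover have "AE \<omega> in M. \<omega> \<in> {\<omega> \<in> space M. selected \<omega>} \<longrightarrow>
          real_cond_exp M past_sel rej_term \<omega> \<le> real_cond_exp M past_sel level_term \<omega>"
  proof (rule real_cond_exp_le_on[OF sub S integrable_terms(3,2)])
    fix A assume A: "A \<in> sets past_sel" "A \<subseteq> {\<omega> \<in> space M. selected \<omega>}"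
    show "(\<integral>\<omega>. indicator A \<omega> * rej_term \<omega> \<partial>M) \<le> (\<integral>\<omega>. indicator A \<omega> * level_term \<omega> \<partial>M)"
      unfolding decompose[OF A integrable_terms(2)] decompose[OF A integrable_terms(3)]
      using past_A by (intro sum_mono integral_atom_rej_le_level) blast
  qed
  moreover have "AE \<omega> in M. \<omega> \<in> space M"
    by simp
  ultimately show ?thesis
    by eventually_elim auto
qed

end

theorem lemma2:
  fixes M :: "'a measure" and P :: "nat \<Rightarrow> 'a \<Rightarrow> real"
    and al la ta :: level_fn and g :: "bool list \<Rightarrow> real"
    and H0 :: "nat set" and T t :: nat
  assumes "prob_space M"
    and indep: "prob_space.indep_vars M (\<lambda>_. borel) P {1..}"
    and pval: "\<And>j \<omega>. j \<ge> 1 \<Longrightarrow> \<omega> \<in> space M \<Longrightarrow> P j \<omega> \<in> {0..1}"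
    and g_mono: "\<And>r r'. length r = T \<Longrightarrow> list_all2 (\<le>) r r' \<Longrightarrow> g r \<le> g r'"
    and mono_al: "\<And>s. s \<ge> 1 \<Longrightarrow> mono_past al s"
    and mono_la: "\<And>s. s \<ge> 1 \<Longrightarrow> mono_past la s"
    and mono_ta: "\<And>s. s \<ge> 1 \<Longrightarrow> mono_past (\<lambda>k r c s. 1 - ta k r c s) s"
    and range: "\<And>s r c q. s \<ge> 1 \<Longrightarrow> length r = s - 1 \<Longrightarrow> length c = s - 1 \<Longrightarrow> length q = s - 1 \<Longrightarrow>
                  al s r c q \<in> {0..1} \<and> la s r c q \<in> {0..1} \<and> ta s r c q \<in> {0..1}"
    and order: "\<And>s r c q. s \<ge> 1 \<Longrightarrow> length r = s - 1 \<Longrightarrow> length c = s - 1 \<Longrightarrow> length q = s - 1 \<Longrightarrow>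
                  al s r c q \<le> la s r c q \<and> la s r c q < ta s r c q"
    and t: "1 \<le> t" "t \<le> T" "t \<in> H0"
    and cuc: "cond_unif_conservative M P al la ta t"
  shows "AE \<omega> in M. P t \<omega> \<le> lev al la ta ta (\<lambda>j. P j \<omega>) t \<longrightarrow>
     (let G = past_with M P al la ta t (\<lambda>\<omega>. P t \<omega> \<le> lev al la ta ta (\<lambda>j. P j \<omega>) t);
          A = (\<lambda>\<omega>. lev al la ta al (\<lambda>j. P j \<omega>) t);
          L = (\<lambda>\<omega>. lev al la ta la (\<lambda>j. P j \<omega>) t);
          U = (\<lambda>\<omega>. lev al la ta ta (\<lambda>j. P j \<omega>) t);
          D = (\<lambda>\<omega>. max (g (fst (hist al la ta (\<lambda>j. P j \<omega>) T))) 1)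
      in real_cond_exp M G (\<lambda>\<omega>. A \<omega> * of_bool (L \<omega> < P t \<omega> \<and> P t \<omega> \<le> U \<omega>)
                                   / ((U \<omega> - L \<omega>) * D \<omega>)) \<omega>
           \<ge> real_cond_exp M G (\<lambda>\<omega>. A \<omega> / (U \<omega> * D \<omega>)) \<omega>
       \<and> real_cond_exp M G (\<lambda>\<omega>. A \<omega> / (U \<omega> * D \<omega>)) \<omega>
           \<ge> real_cond_exp M G (\<lambda>\<omega>. of_bool (P t \<omega> \<le> A \<omega>) / D \<omega>) \<omega>)"
proof -
  interpret addis_step M P al la ta g T t
    by (intro addis_step.intro addis_step_axioms.intro) (use assms in auto)
  show ?thesis
    using cond_exp_terms_ordered
    unfolding Let_def lev_eq_level past_sel_def selected_def[abs_def] est_term_def[abs_def]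
      level_term_def[abs_def] rej_term_def[abs_def] denom_def
    by simp
qed

end
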